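(* Assume $N>2m$, where $m=\max_i r_i$. Fix all reported data except bidder $i$'s unit price. If bidder $i$ wins (is selected) under Algorithm 3 with unit price $v_i$, then it also wins with every unit price $v_i'>v_i$. Equivalently, the (deterministic) winning probability of bidder $i$ is monotonically non-decreasing in its bidding price.
   Context: Setting: a finite set of bidders $\mathcal{B}=\mathcal{B}_r\cup\mathcal{B}_u$ and $N$ resource blocks $k=1,\dots,N$, each in a sub-band $p(k)$. Bidder $i$ reports a positive integer $r_i$, a unit price $v_i\ge0$ and CQI values $c_{i,s}$ for each sub-band $s$. $\mathrm{CR}_c\ge0$ is the number of bits per RB at CQI $c$. Let $R_{ik}=v_i\mathrm{CR}_{c_{i,p(k)}}$, $m=\max_ir_i$ and $\delta=N/m$. Algorithm 3: 1. Initialize $x=0$, $\mathcal{C}_1=\emptyset$, $\mathcal{C}_2=\emptyset$, $t=0$, $\lambda_k^0=1/N$. 2. While $\mathcal{C}_1\ne\mathcal{B}$ and $\sum_k\lambda_k^t\le\exp(\delta-2)$: (a) choose $(\mu,\mathcal{D})$ maximizing $\sum_{k\in\mathcal{D}}R_{\mu k}$ over $\mu\in\mathcal{B}\setminus\mathcal{C}_1$ and $\mathcal{D}\subseteq\{1,\dots,N\}\setminus\mathcal{C}_2$ with $|\mathcal{D}|=r_\mu$; (b) set $x_\mu=1$, $a_{\mu k}=1$ for $k\in\mathcal{D}$, $\mathcal{C}_1\leftarrow\mathcal{C}_1\cup\{\mu\}$, $\mathcal{C}_2\leftarrow\mathcal{C}_2\cup\mathcal{D}$; (c) set $\lambda_k^{t+1}=\lambda_k^t\exp(\delta-2)^{r_\mu/(N-2m)}$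 for all $k$, and $t\leftarrow t+1$. Bidder $i$ wins if $x_i=1$. *)

theory Defs
  imports Complex_Main
begin

text \<open>Data of an instance: bidder set B, number of resource blocks N (blocks are 1..N),
  sub-band map p, requested block numbers r, unit prices v, CQI reports c,
  rate table CR (bits per RB at a given CQI), and a fixed deterministic
  tie-breaking priority tb (an injective ranking of candidate pairs (bidder, block set)).\<close>

definition Rval :: "('b \<Rightarrow> real) \<Rightarrow> ('b \<Rightarrow> 's \<Rightarrow> nat) \<Rightarrow> (nat \<Rightarrow> real) \<Rightarrow> (nat \<Rightarrow> 's)
                    \<Rightarrow> 'b \<Rightarrow> nat \<Rightarrow> real" where
  "Rval v c CR p i k = v i * CR (c i (p k))"

definition mmax :: "'b set \<Rightarrow> ('b \<Rightarrow> nat) \<Rightarrow> nat" where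
  "mmax B r = Max (r ` B)"

definition delta :: "nat \<Rightarrow> 'b set \<Rightarrow> ('b \<Rightarrow> nat) \<Rightarrow> real" where
  "delta N B r = real N / real (mmax B r)"

definition cands :: "'b set \<Rightarrow> nat \<Rightarrow> ('b \<Rightarrow> nat) \<Rightarrow> 'b set \<Rightarrow> nat set \<Rightarrow> ('b \<times> nat set) set" where
  "cands B N r C1 C2 = {(\<mu>, D). \<mu> \<in> B - C1 \<and> D \<subseteq> {1..N} - C2 \<and> card D = r \<mu>}"

definition maximizers ::
  "'b set \<Rightarrow> nat \<Rightarrow> ('b \<Rightarrow> nat) \<Rightarrow> ('b \<Rightarrow> real) \<Rightarrow> ('b \<Rightarrow> 's \<Rightarrow> nat) \<Rightarrow> (nat \<Rightarrow> real) \<Rightarrow> (nat \<Rightarrow> 's)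
   \<Rightarrow> 'b set \<Rightarrow> nat set \<Rightarrow> ('b \<times> nat set) set" where
  "maximizers B N r v c CR p C1 C2 =
     {x \<in> cands B N r C1 C2.
        \<forall>y \<in> cands B N r C1 C2.
          (\<Sum>k\<in>snd y. Rval v c CR p (fst y) k) \<le> (\<Sum>k\<in>snd x. Rval v c CR p (fst x) k)}"

definition choice ::
  "('b \<times> nat set \<Rightarrow> nat) \<Rightarrow> 'b set \<Rightarrow> nat \<Rightarrow> ('b \<Rightarrow> nat) \<Rightarrow> ('b \<Rightarrow> real) \<Rightarrow> ('b \<Rightarrow> 's \<Rightarrow> nat)
   \<Rightarrow> (nat \<Rightarrow> real) \<Rightarrow> (nat \<Rightarrow> 's) \<Rightarrow> 'b set \<Rightarrow> nat set \<Rightarrow> 'b \<times> nat set" where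
  "choice tb B N r v c CR p C1 C2 =
     (ARG_MIN tb x. x \<in> maximizers B N r v c CR p C1 C2)"

text \<open>The while-loop of Algorithm 3, run with fuel n. State: (C1, C2, \<lambda>).
  Each executed iteration adds a new bidder to C1, so card B iterations suffice.\<close>
fun alg3_loop ::
  "('b \<times> nat set \<Rightarrow> nat) \<Rightarrow> 'b set \<Rightarrow> nat \<Rightarrow> ('b \<Rightarrow> nat) \<Rightarrow> ('b \<Rightarrow> real) \<Rightarrow> ('b \<Rightarrow> 's \<Rightarrow> nat)
   \<Rightarrow> (nat \<Rightarrow> real) \<Rightarrow> (nat \<Rightarrow> 's) \<Rightarrow> nat \<Rightarrow> 'b set \<times> nat set \<times> (nat \<Rightarrow> real)
   \<Rightarrow> 'b set \<times> nat set \<times> (nat \<Rightarrow> real)" where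
  "alg3_loop tb B N r v c CR p 0 st = st"
| "alg3_loop tb B N r v c CR p (Suc n) (C1, C2, lam) =
     (if C1 \<noteq> B \<and> (\<Sum>k\<in>{1..N}. lam k) \<le> exp (delta N B r - 2)
         \<and> cands B N r C1 C2 \<noteq> {}
      then (let (\<mu>, D) = choice tb B N r v c CR p C1 C2
            in alg3_loop tb B N r v c CR p n
                 (C1 \<union> {\<mu>}, C2 \<union> D,
                  \<lambda>k. lam k * exp (delta N B r - 2) powr (real (r \<mu>) / (real N - 2 * real (mmax B r)))))
      else (C1, C2, lam))"

definition alg3_winners ::
  "('b \<times> nat set \<Rightarrow> nat) \<Rightarrow> 'b set \<Rightarrow> nat \<Rightarrow> ('b \<Rightarrow> nat) \<Rightarrow> ('b \<Rightarrow> real) \<Rightarrow> ('b \<Rightarrow> 's \<Rightarrow> nat)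
   \<Rightarrow> (nat \<Rightarrow> real) \<Rightarrow> (nat \<Rightarrow> 's) \<Rightarrow> 'b set" where
  "alg3_winners tb B N r v c CR p =
     fst (alg3_loop tb B N r v c CR p (card B) ({}, {}, \<lambda>k. 1 / real N))"

end

theory Submission
  imports Defs
begin

text \<open>Raising the price of bidder i increases the value of each of its candidates and changes
  no other value. Hence in every iteration the tie-broken maximizer of step (a) either stays the
  same, and then so does the whole state of the loop, or it becomes a pair with bidder i, which
  then wins at once because a selected bidder is never removed. Induction on the iterations
  gives the claim.\<close>

definition argmax_set :: "('a \<Rightarrow> 'c::linorder) \<Rightarrow> 'a set \<Rightarrow> 'a set" where
  "argmax_set f S = {x \<in> S. \<forall>y \<in> S. f y \<le> f x}"

lemma argmax_set_nonempty:
  assumes "finite S" "S \<noteq> {}"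
  shows "argmax_set f S \<noteq> {}"
proof -
  have "Max (f ` S) \<in> f ` S" using assms by simp
  then obtain x where "x \<in> S" "f x = Max (f ` S)" by auto
  then have "x \<in> argmax_set f S" using assms(1) by (simp add: argmax_set_def)
  then show ?thesis by blast
qed

lemma argmax_set_dominating:
  fixes f g :: "'a \<Rightarrow> 'c::linorder"
  assumes le: "\<And>y. y \<in> S \<Longrightarrow> f y \<le> g y"
    and eq: "\<And>y. y \<in> S \<Longrightarrow> \<not> P y \<Longrightarrow> g y = f y"
    and x: "x \<in> argmax_set g S" and "\<not> P x"
  shows "x \<in> argmax_set f S" and "argmax_set f S \<subseteq> argmax_set g S"
proof -
  have xS: "x \<in> S" and gmax: "\<And>y. y \<in> S \<Longrightarrow> g y \<le> g x"
    using x by (auto simp: argmax_set_def)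
  have gx: "g x = f x" using eq[OF xS \<open>\<not> P x\<close>] .
  have fmax: "f y \<le> f x" if "y \<in> S" for y
    using le[OF that] gmax[OF that] gx by simp
  then show "x \<in> argmax_set f S" using xS by (simp add: argmax_set_def)
  show "argmax_set f S \<subseteq> argmax_set g S"
  proof
    fix z assume "z \<in> argmax_set f S"
    then have "z \<in> S" "f x \<le> f z" using xS by (auto simp: argmax_set_def)
    then have "g x \<le> g z" using le gx by (metis order.trans)
    then show "z \<in> argmax_set g S"
      using \<open>z \<in> S\<close> gmax by (auto simp: argmax_set_def intro: order.trans)
  qed
qed

lemma arg_min_nat_subset_eq:
  fixes m :: "'a \<Rightarrow> nat"
  assumes inj: "inj_on m B" and AB: "A \<subseteq> B" and mem: "(ARG_MIN m x. x \<in> B) \<in> A"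
  shows "(ARG_MIN m x. x \<in> A) = (ARG_MIN m x. x \<in> B)"
proof -
  let ?a = "ARG_MIN m x. x \<in> A" and ?b = "ARG_MIN m x. x \<in> B"
  have a: "?a \<in> A" using arg_min_natI[of "\<lambda>x. x \<in> A", OF mem] .
  have "m ?a \<le> m ?b" using arg_min_nat_le[of "\<lambda>x. x \<in> A", OF mem] .
  moreover have "m ?b \<le> m ?a" using arg_min_nat_le[of "\<lambda>x. x \<in> B"] a AB by blast
  ultimately show ?thesis using inj a mem AB by (auto simp: inj_on_def)
qed

lemma maximizers_eq_argmax_set:
  "maximizers B N r v c CR p C1 C2 =
     argmax_set (\<lambda>(\<mu>, D). \<Sum>k\<in>D. Rval v c CR p \<mu> k) (cands B N r C1 C2)"
  by (simp add: maximizers_def argmax_set_def split_beta)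

lemma choice_raise_price:
  assumes fin: "finite B" and CR: "\<forall>q. CR q \<ge> 0"
    and inj: "inj_on tb (B \<times> Pow {1..N})" and le: "v i \<le> v'"
    and ne: "cands B N r C1 C2 \<noteq> {}"
  shows "choice tb B N r (v(i := v')) c CR p C1 C2 = choice tb B N r v c CR p C1 C2
    \<or> fst (choice tb B N r (v(i := v')) c CR p C1 C2) = i"
proof -
  let ?S = "cands B N r C1 C2"
  let ?f = "\<lambda>(\<mu>, D). \<Sum>k\<in>D. Rval v c CR p \<mu> k"
  let ?g = "\<lambda>(\<mu>, D). \<Sum>k\<in>D. Rval (v(i := v')) c CR p \<mu> k"
  let ?x = "choice tb B N r (v(i := v')) c CR p C1 C2"
  have S_sub: "?S \<subseteq> B \<times> Pow {1..N}" by (auto simp: cands_def)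
  have "finite ?S" by (rule finite_subset[OF S_sub]) (simp add: fin)
  then have "argmax_set ?g ?S \<noteq> {}" using ne by (rule argmax_set_nonempty)
  then have x: "?x \<in> argmax_set ?g ?S"
    by (auto simp: choice_def maximizers_eq_argmax_set intro: arg_min_natI)
  have f_le_g: "?f y \<le> ?g y" for y
    using le CR by (auto simp: Rval_def split_beta intro!: sum_mono mult_right_mono)
  have g_eq_f: "fst y \<noteq> i \<Longrightarrow> ?g y = ?f y" for y
    by (simp add: Rval_def split_beta)
  show ?thesis
  proof (cases "fst ?x = i")
    case False
    have "argmax_set ?f ?S \<subseteq> argmax_set ?g ?S" "?x \<in> argmax_set ?f ?S"
      using argmax_set_dominating[of ?S ?f ?g "\<lambda>y. fst y = i", OF _ _ x False]
        f_le_g g_eq_f by auto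
    moreover have "inj_on tb (argmax_set ?g ?S)"
      using S_sub by (intro inj_on_subset[OF inj]) (auto simp: argmax_set_def)
    ultimately show ?thesis
      by (simp add: choice_def maximizers_eq_argmax_set arg_min_nat_subset_eq)
  qed simp
qed

lemma alg3_loop_keeps_selected:
  "i \<in> C1 \<Longrightarrow> i \<in> fst (alg3_loop tb B N r v c CR p n (C1, C2, lam))"
proof (induction n arbitrary: C1 C2 lam)
  case (Suc n)
  then show ?case
    by (cases "choice tb B N r v c CR p C1 C2") (simp add: Let_def)
qed simp

lemma alg3_loop_raise_price:
  assumes fin: "finite B" and CR: "\<forall>q. CR q \<ge> 0"
    and inj: "inj_on tb (B \<times> Pow {1..N})" and le: "v i \<le> v'"
    and win: "i \<in> fst (alg3_loop tb B N r v c CR p n st)"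
  shows "i \<in> fst (alg3_loop tb B N r (v(i := v')) c CR p n st)"
  using win
proof (induction n arbitrary: st)
  case (Suc n)
  obtain C1 C2 lam where st: "st = (C1, C2, lam)" by (cases st)
  show ?case
  proof (cases "C1 \<noteq> B \<and> (\<Sum>k\<in>{1..N}. lam k) \<le> exp (delta N B r - 2)
                  \<and> cands B N r C1 C2 \<noteq> {}")
    case True
    obtain \<mu> D where old: "choice tb B N r v c CR p C1 C2 = (\<mu>, D)" by fastforce
    obtain \<mu>' D' where new: "choice tb B N r (v(i := v')) c CR p C1 C2 = (\<mu>', D')"
      by fastforce
    from choice_raise_price[where v = v and i = i, OF fin CR inj le, of r C1 C2 c p] True old new
    consider "\<mu>' = \<mu>" "D' = D" | "\<mu>' = i" by auto
    then show ?thesis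
    proof cases
      case 1
      then show ?thesis
        using Suc.prems unfolding st alg3_loop.simps if_P[OF True] old new
        by (simp add: Suc.IH)
    next
      case 2
      then show ?thesis
        unfolding st alg3_loop.simps if_P[OF True] new by (simp add: alg3_loop_keeps_selected)
    qed
  next
    case False
    then show ?thesis
      using Suc.prems unfolding st alg3_loop.simps if_not_P[OF False] by simp
  qed
qed simp

theorem lemma2:
  fixes B :: "'b set" and N :: nat and r :: "'b \<Rightarrow> nat" and v :: "'b \<Rightarrow> real"
    and c :: "'b \<Rightarrow> 's \<Rightarrow> nat" and CR :: "nat \<Rightarrow> real" and p :: "nat \<Rightarrow> 's"
    and tb :: "'b \<times> nat set \<Rightarrow> nat" and i :: 'b and v' :: real
  assumes "finite B"
    and "\<forall>j\<in>B. r j > 0"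
    and "\<forall>j\<in>B. v j \<ge> 0"
    and "\<forall>q. CR q \<ge> 0"
    and "inj_on tb (B \<times> Pow {1..N})"
    and "N > 2 * mmax B r"
    and "i \<in> B"
    and "v' > v i"
    and "i \<in> alg3_winners tb B N r v c CR p"
  shows "i \<in> alg3_winners tb B N r (v(i := v')) c CR p"
  using alg3_loop_raise_price[where v = v and i = i, OF assms(1,4,5) less_imp_le[OF assms(8)]] assms(9)
  unfolding alg3_winners_def by blast

end
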